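(* Let $\mathfrak{g}$ be a nonzero finite-dimensional complex solvable Lie algebra. Then $\mathfrak{g}$ admits a non-trivial CPA-structure.
   Context: A CPA-structure on a Lie algebra $\mathfrak{g}$ is a bilinear product $x\cdot y$ on $\mathfrak{g}$ satisfying, for all $x,y,z$: $x\cdot y=y\cdot x$; $[x,y]\cdot z=x\cdot(y\cdot z)-y\cdot(x\cdot z)$; $x\cdot[y,z]=[x\cdot y,z]+[y,x\cdot z]$. It is non-trivial if $x\cdot y\neq0$ for some $x,y$. *)

theory Defs
  imports Complex_Main
begin

definition lie_algebra :: "(complex \<Rightarrow> 'a::ab_group_add \<Rightarrow> 'a) \<Rightarrow> ('a \<Rightarrow> 'a \<Rightarrow> 'a) \<Rightarrow> bool" where
  "lie_algebra sc br \<longleftrightarrow>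
     vector_space sc \<and>
     (\<forall>x y z. br (x + y) z = br x z + br y z) \<and>
     (\<forall>x y z. br x (y + z) = br x y + br x z) \<and>
     (\<forall>c x y. br (sc c x) y = sc c (br x y)) \<and>
     (\<forall>c x y. br x (sc c y) = sc c (br x y)) \<and>
     (\<forall>x. br x x = 0) \<and>
     (\<forall>x y z. br x (br y z) + br y (br z x) + br z (br x y) = 0)"

definition fin_dim :: "(complex \<Rightarrow> 'a::ab_group_add \<Rightarrow> 'a) \<Rightarrow> bool" where
  "fin_dim sc \<longleftrightarrow> (\<exists>B. finite B \<and> module.span sc B = UNIV)"

fun derived_series :: "(complex \<Rightarrow> 'a::ab_group_add \<Rightarrow> 'a) \<Rightarrow> ('a \<Rightarrow> 'a \<Rightarrow> 'a) \<Rightarrow> nat \<Rightarrow> 'a set" where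
  "derived_series sc br 0 = UNIV"
| "derived_series sc br (Suc n) =
     module.span sc {br x y | x y. x \<in> derived_series sc br n \<and> y \<in> derived_series sc br n}"

definition solvable_lie :: "(complex \<Rightarrow> 'a::ab_group_add \<Rightarrow> 'a) \<Rightarrow> ('a \<Rightarrow> 'a \<Rightarrow> 'a) \<Rightarrow> bool" where
  "solvable_lie sc br \<longleftrightarrow> (\<exists>n. derived_series sc br n = {0})"

definition cpa_structure :: "(complex \<Rightarrow> 'a::ab_group_add \<Rightarrow> 'a) \<Rightarrow> ('a \<Rightarrow> 'a \<Rightarrow> 'a) \<Rightarrow> ('a \<Rightarrow> 'a \<Rightarrow> 'a) \<Rightarrow> bool" where
  "cpa_structure sc br p \<longleftrightarrow>
     (\<forall>x y z. p (x + y) z = p x z + p y z) \<and>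
     (\<forall>x y z. p x (y + z) = p x y + p x z) \<and>
     (\<forall>c x y. p (sc c x) y = sc c (p x y)) \<and>
     (\<forall>c x y. p x (sc c y) = sc c (p x y)) \<and>
     (\<forall>x y. p x y = p y x) \<and>
     (\<forall>x y z. p (br x y) z = p x (p y z) - p y (p x z)) \<and>
     (\<forall>x y z. p x (br y z) = br (p x y) z + br y (p x z))"

end

theory Submission
  imports Defs "HOL-Computational_Algebra.Fundamental_Theorem_Algebra"
begin

text \<open>By Lie's theorem a solvable complex Lie algebra has a common eigenvector c of all ad x,
  say [x, c] = lam(x) c, and lam is a linear form vanishing on [g, g].  Then
  x \<cdot> y = f(x) f(y) c is a nontrivial CPA-structure, where f = lam if lam \<noteq> 0, and otherwise
  (c is central) f is any nonzero linear form vanishing on [g, g], which exists since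
  [g, g] \<noteq> g.  Lie's theorem is proved by induction on the dimension: eigenvectors of a single
  operator come from the fundamental theorem of algebra applied to a Krylov space, and Lie's
  lemma from comparing traces on such a space.\<close>

locale finite_dim_lie_algebra = finite_dimensional_vector_space sc Basis
  for sc :: "complex \<Rightarrow> 'a::ab_group_add \<Rightarrow> 'a" and Basis :: "'a set" +
  fixes br :: "'a \<Rightarrow> 'a \<Rightarrow> 'a"
  assumes br_addL: "br (x + y) z = br x z + br y z"
    and br_addR: "br x (y + z) = br x y + br x z"
    and br_scaleL: "br (sc c x) y = sc c (br x y)"
    and br_scaleR: "br x (sc c y) = sc c (br x y)"
    and br_self: "br x x = 0"
    and jacobi: "br x (br y z) + br y (br z x) + br z (br x y) = 0"
begin

lemma br_zeroL [simp]: "br 0 y = 0"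
  using br_addL[of 0 0 y] by simp

lemma br_zeroR [simp]: "br x 0 = 0"
  using br_addR[of x 0 0] by simp

lemma br_minusR: "br x (- y) = - br x y"
  using br_addR[of x y "- y"] by (simp add: eq_neg_iff_add_eq_0 add.commute)

lemma br_antisym: "br x y = - br y x"
proof -
  have "br x y + br y x = 0"
    using br_addL[of x y "x + y"] br_addR[of x x y] br_addR[of y x y]
      br_self[of x] br_self[of y] br_self[of "x + y"]
    by simp
  then show ?thesis by (simp add: eq_neg_iff_add_eq_0)
qed

lemma br_sumR: "br x (sum f A) = (\<Sum>i\<in>A. br x (f i))"
  by (induction A rule: infinite_finite_induct) (auto simp: br_addR)

lemma jacobi_derivation: "br x (br y z) = br (br x y) z + br y (br x z)"
proof -
  have "br y (br z x) = - br y (br x z)" by (simp add: br_antisym[of z x] br_minusR)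
  moreover have "br z (br x y) = - br (br x y) z" by (simp add: br_antisym[of z "br x y"])
  ultimately have "br x (br y z) + - br y (br x z) + - br (br x y) z = 0"
    using jacobi[of x y z] by simp
  then show ?thesis by (simp add: algebra_simps eq_neg_iff_add_eq_0)
qed

lemma br_in_span_image: "x \<in> span S \<Longrightarrow> br z x \<in> span (br z ` S)"
proof -
  have "subspace {x. br z x \<in> span (br z ` S)}"
    by (rule subspaceI) (simp_all add: span_zero br_addR br_scaleR span_add span_scale)
  moreover have "S \<subseteq> {x. br z x \<in> span (br z ` S)}" by (auto intro: span_base)
  ultimately show "x \<in> span S \<Longrightarrow> br z x \<in> span (br z ` S)"
    using span_minimal by blast
qed

lemma br_span_into_subspace:
  "subspace W \<Longrightarrow> (\<And>w. w \<in> S \<Longrightarrow> br z w \<in> W) \<Longrightarrow> x \<in> span S \<Longrightarrow> br z x \<in> W"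
  using br_in_span_image[of x S z] span_minimal[of "br z ` S" W] by auto

lemma independent_seq_coeff_zero:
  fixes u :: "nat \<Rightarrow> 'a"
  assumes ind: "independent (u ` {..<m})" and inj: "inj_on u {..<m}"
    and sum0: "(\<Sum>i<m. sc (c i) (u i)) = 0" and j: "j < m"
  shows "c j = 0"
proof -
  define g where "g x = c (the_inv_into {..<m} u x)" for x
  have "(\<Sum>x\<in>u ` {..<m}. sc (g x) x) = (\<Sum>i<m. sc (g (u i)) (u i))"
    by (rule sum.reindex[OF inj, unfolded comp_def])
  also have "\<dots> = (\<Sum>i<m. sc (c i) (u i))"
    by (rule sum.cong) (simp_all add: g_def the_inv_into_f_f[OF inj])
  finally have "(\<Sum>x\<in>u ` {..<m}. sc (g x) x) = 0" using sum0 by simp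
  then have "g (u j) = 0"
    using independentD[OF ind, of "u ` {..<m}" g "u j"] j by blast
  then show ?thesis by (simp add: g_def the_inv_into_f_f[OF inj] j)
qed

lemma representation_seq_expansion:
  fixes u :: "nat \<Rightarrow> 'a"
  assumes ind: "independent (u ` {..<m})" and inj: "inj_on u {..<m}"
    and v: "v \<in> span (u ` {..<m})"
  shows "v = (\<Sum>j<m. sc (representation (u ` {..<m}) v (u j)) (u j))"
proof -
  have "v = (\<Sum>b\<in>u ` {..<m}. sc (representation (u ` {..<m}) v b) b)"
    by (rule sum_representation_eq[OF ind v, symmetric]) auto
  also have "\<dots> = (\<Sum>j<m. sc (representation (u ` {..<m}) v (u j)) (u j))"
    by (rule sum.reindex[OF inj, unfolded comp_def])
  finally show ?thesis .
qed

subsection \<open>Krylov sequences\<close>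

definition krylov :: "'a \<Rightarrow> 'a \<Rightarrow> nat \<Rightarrow> 'a" where
  "krylov z w i = (br z ^^ i) w"

lemma krylov_0 [simp]: "krylov z w 0 = w"
  and krylov_Suc: "krylov z w (Suc i) = br z (krylov z w i)"
  by (simp_all add: krylov_def)

lemma krylov_in_invariant:
  "w \<in> W \<Longrightarrow> (\<And>x. x \<in> W \<Longrightarrow> br z x \<in> W) \<Longrightarrow> krylov z w i \<in> W"
  by (induction i) (simp_all add: krylov_Suc)

lemma krylov_independent_prefix:
  assumes "\<And>i. i < k \<Longrightarrow> krylov z w i \<notin> span (krylov z w ` {..<i})"
  shows "independent (krylov z w ` {..<k}) \<and> inj_on (krylov z w) {..<k}"
  using assms
proof (induction k)
  case 0
  then show ?case by (simp add: independent_empty)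
next
  case (Suc k)
  have IH: "independent (krylov z w ` {..<k}) \<and> inj_on (krylov z w) {..<k}"
    using Suc.prems by (intro Suc.IH) simp
  have new: "krylov z w k \<notin> span (krylov z w ` {..<k})"
    using Suc.prems[of k] by simp
  then have "krylov z w k \<notin> krylov z w ` {..<k}"
    by (auto intro: span_base)
  then have "inj_on (krylov z w) (insert k {..<k})"
    using IH by simp
  moreover have "independent (insert (krylov z w k) (krylov z w ` {..<k}))"
    using independent_insertI[OF new] IH by blast
  ultimately show ?case by (simp add: lessThan_Suc)
qed

lemma krylov_basis_of_cyclic_span:
  assumes "w \<noteq> 0"
  obtains m where "0 < m" "independent (krylov z w ` {..<m})" "inj_on (krylov z w) {..<m}"
    "krylov z w m \<in> span (krylov z w ` {..<m})"
proof -
  let ?P = "\<lambda>i. krylov z w i \<in> span (krylov z w ` {..<i})"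
  have "\<exists>i. ?P i"
  proof (rule ccontr)
    assume "\<not> (\<exists>i. ?P i)"
    then have indep: "independent (krylov z w ` {..<Suc dimension})"
      and inj: "inj_on (krylov z w) {..<Suc dimension}"
      using krylov_independent_prefix by blast+
    have "card (krylov z w ` {..<Suc dimension}) \<le> dimension"
      using independent_bound_general[OF indep] dim_subset_UNIV by (metis le_trans)
    moreover have "card (krylov z w ` {..<Suc dimension}) = Suc dimension"
      using card_image[OF inj] by simp
    ultimately show False by simp
  qed
  define m where "m = (LEAST i. ?P i)"
  have Pm: "?P m"
    unfolding m_def by (rule LeastI_ex) fact
  have "\<not> ?P i" if "i < m" for i
    using that unfolding m_def by (rule not_less_Least)
  then have "independent (krylov z w ` {..<m}) \<and> inj_on (krylov z w) {..<m}"
    by (intro krylov_independent_prefix) blast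
  moreover have "0 < m"
  proof (rule ccontr)
    assume "\<not> 0 < m"
    then have "w \<in> span {}" using Pm by simp
    then show False using assms by simp
  qed
  ultimately show ?thesis
    using that Pm by blast
qed

subsection \<open>Eigenvectors of a single operator\<close>

definition ad_poly :: "'a \<Rightarrow> complex poly \<Rightarrow> 'a \<Rightarrow> 'a" where
  "ad_poly z p w = (\<Sum>i\<le>degree p. sc (coeff p i) (krylov z w i))"

lemma ad_poly_bound:
  "degree p < n \<Longrightarrow> ad_poly z p w = (\<Sum>i<n. sc (coeff p i) (krylov z w i))"
  unfolding ad_poly_def
  by (rule sum.mono_neutral_right[symmetric]) (auto simp: coeff_eq_0)

lemma ad_poly_0 [simp]: "ad_poly z 0 w = 0"
  by (simp add: ad_poly_def)

lemma ad_poly_add: "ad_poly z (p + q) w = ad_poly z p w + ad_poly z q w"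
proof -
  let ?n = "Suc (max (degree p) (degree q))"
  have "degree (p + q) < ?n" using degree_add_le_max[of p q] by simp
  then show ?thesis
    by (simp add: ad_poly_bound[of _ ?n] sum.distrib scale_left_distrib del: sum.lessThan_Suc)
qed

lemma ad_poly_diff: "ad_poly z (p - q) w = ad_poly z p w - ad_poly z q w"
  using ad_poly_add[of z "p - q" q w] by (simp add: eq_diff_eq)

lemma ad_poly_sum: "ad_poly z (sum f A) w = (\<Sum>i\<in>A. ad_poly z (f i) w)"
  by (induction A rule: infinite_finite_induct) (simp_all add: ad_poly_add)

lemma ad_poly_smult: "ad_poly z (smult c p) w = sc c (ad_poly z p w)"
  by (simp add: ad_poly_bound[of _ "Suc (degree p)"] scale_sum_right del: sum.lessThan_Suc)

lemma ad_poly_monom: "ad_poly z (monom a n) w = sc a (krylov z w n)"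
proof -
  have "ad_poly z (monom a n) w = (\<Sum>i<Suc n. sc (coeff (monom a n) i) (krylov z w i))"
    by (rule ad_poly_bound) (simp add: le_imp_less_Suc degree_monom_le)
  also have "\<dots> = sc a (krylov z w n)"
    by (simp add: if_distrib sum.delta cong: if_cong)
  finally show ?thesis .
qed

lemma ad_poly_pCons_0: "ad_poly z (pCons 0 p) w = br z (ad_poly z p w)"
proof -
  have "degree (pCons 0 p) < Suc (Suc (degree p))"
    using degree_pCons_le[of 0 p] by simp
  then have "ad_poly z (pCons 0 p) w
      = (\<Sum>i<Suc (Suc (degree p)). sc (coeff (pCons 0 p) i) (krylov z w i))"
    by (rule ad_poly_bound)
  also have "\<dots> = (\<Sum>i<Suc (degree p). sc (coeff p i) (krylov z w (Suc i)))"
    by (simp add: sum.lessThan_Suc_shift del: sum.lessThan_Suc)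
  also have "\<dots> = br z (\<Sum>i<Suc (degree p). sc (coeff p i) (krylov z w i))"
    by (simp add: br_sumR br_scaleR krylov_Suc del: sum.lessThan_Suc)
  also have "\<dots> = br z (ad_poly z p w)"
    by (simp add: ad_poly_bound[of _ "Suc (degree p)"])
  finally show ?thesis .
qed

lemma ad_poly_in_invariant:
  "subspace W \<Longrightarrow> (\<And>x. x \<in> W \<Longrightarrow> br z x \<in> W) \<Longrightarrow> w \<in> W \<Longrightarrow> ad_poly z p w \<in> W"
  unfolding ad_poly_def by (intro subspace_sum subspace_scale krylov_in_invariant)

lemma ad_poly_eq_0_low_degree:
  assumes ind: "independent (krylov z w ` {..<m})" and inj: "inj_on (krylov z w) {..<m}"
    and deg: "degree p < m" and zero: "ad_poly z p w = 0"
  shows "p = 0"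
proof (rule poly_eqI)
  fix i
  show "coeff p i = coeff 0 i"
  proof (cases "i < m")
    case True
    have "(\<Sum>i<m. sc (coeff p i) (krylov z w i)) = 0"
      using zero ad_poly_bound[OF deg] by simp
    then show ?thesis
      using independent_seq_coeff_zero[OF ind inj _ True] by simp
  next
    case False
    then show ?thesis using deg by (simp add: coeff_eq_0)
  qed
qed

lemma krylov_annihilating_poly:
  assumes ind: "independent (krylov z w ` {..<m})" and inj: "inj_on (krylov z w) {..<m}"
    and closes: "krylov z w m \<in> span (krylov z w ` {..<m})"
  obtains q where "degree q = m" "ad_poly z q w = 0"
proof -
  let ?c = "\<lambda>i. representation (krylov z w ` {..<m}) (krylov z w m) (krylov z w i)"
  define q where "q = monom 1 m - (\<Sum>i<m. monom (?c i) i)"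
  have coeff_q: "coeff q i = (if m = i then 1 else 0) - (\<Sum>j<m. if j = i then ?c j else 0)" for i
    by (simp add: q_def coeff_sum)
  have "degree q \<le> m" by (rule degree_le) (simp add: coeff_q)
  moreover have "m \<le> degree q" by (rule le_degree) (simp add: coeff_q)
  moreover have "ad_poly z q w = 0"
    using representation_seq_expansion[OF ind inj closes]
    by (simp add: q_def ad_poly_diff ad_poly_sum ad_poly_monom)
  ultimately show ?thesis using that by simp
qed

text \<open>A root a of the annihilating polynomial q = (X - a) r gives the eigenvector
  r(ad z) w, which is nonzero because r has degree below the length of the Krylov basis.\<close>
lemma invariant_subspace_has_eigenvector:
  assumes W: "subspace W" and inv: "\<And>x. x \<in> W \<Longrightarrow> br z x \<in> W"
    and w: "w \<in> W" "w \<noteq> 0"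
  obtains v a where "v \<in> W" "v \<noteq> 0" "br z v = sc a v"
proof -
  obtain m where m: "0 < m" and ind: "independent (krylov z w ` {..<m})"
    and inj: "inj_on (krylov z w) {..<m}" and closes: "krylov z w m \<in> span (krylov z w ` {..<m})"
    using krylov_basis_of_cyclic_span[OF w(2)] by blast
  obtain q where dq: "degree q = m" and q: "ad_poly z q w = 0"
    using krylov_annihilating_poly[OF ind inj closes] by blast
  have "\<not> constant (poly q)" using dq m by (simp add: constant_degree)
  then obtain a where "poly q a = 0" using fundamental_theorem_of_algebra by blast
  then obtain r where qr: "q = [:-a, 1:] * r" using poly_eq_0_iff_dvd by (blast elim: dvdE)
  have "r \<noteq> 0" using qr dq m by auto
  then have "degree r < m"
    using degree_mult_eq[of "[:-a, 1:]" r] qr dq by simp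
  define v where "v = ad_poly z r w"
  have "v \<noteq> 0"
    using ad_poly_eq_0_low_degree[OF ind inj \<open>degree r < m\<close>] \<open>r \<noteq> 0\<close> by (auto simp: v_def)
  moreover have "br z v = sc a v"
  proof -
    have "q = pCons 0 r - smult a r" using qr by simp
    then have "br z v - sc a v = 0"
      using q by (simp add: ad_poly_diff ad_poly_smult ad_poly_pCons_0 v_def)
    then show ?thesis by simp
  qed
  moreover have "v \<in> W" unfolding v_def using W inv w(1) by (rule ad_poly_in_invariant)
  ultimately show ?thesis using that by blast
qed

subsection \<open>Traces along an independent sequence\<close>

definition seq_trace :: "(nat \<Rightarrow> 'a) \<Rightarrow> nat \<Rightarrow> ('a \<Rightarrow> 'a) \<Rightarrow> complex" where
  "seq_trace u m T = (\<Sum>i<m. representation (u ` {..<m}) (T (u i)) (u i))"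

lemma seq_trace_diff:
  assumes ind: "independent (u ` {..<m})"
    and "\<And>i. i < m \<Longrightarrow> S (u i) \<in> span (u ` {..<m})"
    and "\<And>i. i < m \<Longrightarrow> T (u i) \<in> span (u ` {..<m})"
  shows "seq_trace u m (\<lambda>v. S v - T v) = seq_trace u m S - seq_trace u m T"
  unfolding seq_trace_def sum_subtractf[symmetric]
  by (rule sum.cong) (simp_all add: representation_diff[OF ind] assms)

lemma seq_trace_br_commute:
  fixes u :: "nat \<Rightarrow> 'a"
  assumes ind: "independent (u ` {..<m})" and inj: "inj_on u {..<m}"
    and a: "\<And>i. i < m \<Longrightarrow> br a (u i) \<in> span (u ` {..<m})"
    and b: "\<And>i. i < m \<Longrightarrow> br b (u i) \<in> span (u ` {..<m})"
  shows "seq_trace u m (\<lambda>v. br a (br b v)) = seq_trace u m (\<lambda>v. br b (br a v))"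
proof -
  let ?B = "u ` {..<m}"
  let ?c = "\<lambda>v j. representation ?B v (u j)"
  have matrix_product: "?c (br a (br b (u i))) i = (\<Sum>j<m. ?c (br b (u i)) j * ?c (br a (u j)) i)"
    if a: "\<And>i. i < m \<Longrightarrow> br a (u i) \<in> span ?B" and b: "\<And>i. i < m \<Longrightarrow> br b (u i) \<in> span ?B"
      and i: "i < m" for a b i
  proof -
    have "br a (br b (u i)) = br a (\<Sum>j<m. sc (?c (br b (u i)) j) (u j))"
      using representation_seq_expansion[OF ind inj b[OF i]] by simp
    also have "\<dots> = (\<Sum>j<m. sc (?c (br b (u i)) j) (br a (u j)))"
      by (simp only: br_sumR br_scaleR)
    finally have "br a (br b (u i)) = (\<Sum>j<m. sc (?c (br b (u i)) j) (br a (u j)))" .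
    then have "?c (br a (br b (u i))) i = ?c (\<Sum>j<m. sc (?c (br b (u i)) j) (br a (u j))) i"
      by simp
    also have "\<dots> = (\<Sum>j<m. representation ?B (sc (?c (br b (u i)) j) (br a (u j))) (u i))"
      by (subst representation_sum[OF ind]) (auto intro: span_scale a)
    also have "\<dots> = (\<Sum>j<m. ?c (br b (u i)) j * ?c (br a (u j)) i)"
      by (rule sum.cong) (simp_all add: representation_scale[OF ind a])
    finally show ?thesis .
  qed
  have "seq_trace u m (\<lambda>v. br a (br b v))
      = (\<Sum>i<m. \<Sum>j<m. ?c (br b (u i)) j * ?c (br a (u j)) i)"
    unfolding seq_trace_def by (rule sum.cong) (simp_all add: matrix_product a b)
  also have "\<dots> = (\<Sum>j<m. \<Sum>i<m. ?c (br a (u j)) i * ?c (br b (u i)) j)"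
    by (subst sum.swap) (simp add: mult.commute)
  also have "\<dots> = seq_trace u m (\<lambda>v. br b (br a v))"
    unfolding seq_trace_def by (rule sum.cong) (simp_all add: matrix_product a b)
  finally show ?thesis .
qed

lemma seq_trace_triangular:
  fixes u :: "nat \<Rightarrow> 'a"
  assumes ind: "independent (u ` {..<m})" and inj: "inj_on u {..<m}"
    and triangular: "\<And>i. i < m \<Longrightarrow> T (u i) - sc c (u i) \<in> span (u ` {..<i})"
  shows "seq_trace u m T = of_nat m * c"
proof -
  let ?B = "u ` {..<m}"
  have diagonal: "representation ?B (T (u i)) (u i) = c" if i: "i < m" for i
  proof -
    define r where "r = T (u i) - sc c (u i)"
    have "u ` {..<i} \<subseteq> ?B - {u i}"
      using i inj by (auto dest: inj_onD)
    then have r: "r \<in> span (?B - {u i})"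
      using triangular[OF i] span_mono unfolding r_def by blast
    have "representation ?B r (u i) = representation (?B - {u i}) r (u i)"
      using representation_extend[OF ind r] by simp
    also have "\<dots> = 0"
      using representation_ne_zero by blast
    finally have r0: "representation ?B r (u i) = 0" .
    have "r \<in> span ?B" using r span_mono by blast
    moreover have ui: "u i \<in> span ?B" using i by (auto intro: span_base)
    ultimately have "representation ?B (r + sc c (u i)) (u i)
        = representation ?B r (u i) + c * representation ?B (u i) (u i)"
      by (simp add: representation_add[OF ind] representation_scale[OF ind] span_scale)
    then show ?thesis
      using r0 representation_basis[OF ind] i by (simp add: r_def)
  qed
  then show ?thesis by (simp add: seq_trace_def)
qed

subsection \<open>Lie's lemma: weights vanish on commutators\<close>

lemma krylov_weight_triangular:
  assumes zK: "\<And>k. k \<in> K \<Longrightarrow> br k z \<in> K"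
    and weight: "\<And>k. k \<in> K \<Longrightarrow> br k w = sc (lam k) w"
  shows "\<forall>k\<in>K. br k (krylov z w i) - sc (lam k) (krylov z w i) \<in> span (krylov z w ` {..<i})"
proof (induction i)
  case 0
  then show ?case using weight by simp
next
  case (Suc i)
  let ?u = "krylov z w"
  have sub: "span (?u ` {..<i}) \<subseteq> span (?u ` {..<Suc i})" by (intro span_mono) auto
  have ui: "?u i \<in> span (?u ` {..<Suc i})" by (intro span_base) auto
  show ?case
  proof
    fix k assume k: "k \<in> K"
    define r1 where "r1 = br (br k z) (?u i) - sc (lam (br k z)) (?u i)"
    define r2 where "r2 = br k (?u i) - sc (lam k) (?u i)"
    have r1: "r1 \<in> span (?u ` {..<i})" using Suc zK[OF k] unfolding r1_def by blast
    have r2: "r2 \<in> span (?u ` {..<i})" using Suc k unfolding r2_def by blast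
    have "br z r2 \<in> span (br z ` ?u ` {..<i})" by (rule br_in_span_image[OF r2])
    moreover have "br z ` ?u ` {..<i} \<subseteq> ?u ` {..<Suc i}"
      by (auto simp: krylov_Suc[symmetric])
    ultimately have bz: "br z r2 \<in> span (?u ` {..<Suc i})" using span_mono by blast
    have "br k (?u (Suc i)) = br (br k z) (?u i) + br z (br k (?u i))"
      unfolding krylov_Suc by (rule jacobi_derivation)
    also have "\<dots> = (r1 + sc (lam (br k z)) (?u i)) + br z (r2 + sc (lam k) (?u i))"
      by (simp add: r1_def r2_def)
    also have "\<dots> = (r1 + sc (lam (br k z)) (?u i) + br z r2) + sc (lam k) (?u (Suc i))"
      by (simp add: br_addR br_scaleR krylov_Suc algebra_simps)
    finally have "br k (?u (Suc i)) - sc (lam k) (?u (Suc i))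
        = r1 + sc (lam (br k z)) (?u i) + br z r2"
      by simp
    also have "\<dots> \<in> span (?u ` {..<Suc i})"
      using r1 sub ui bz by (intro span_add span_scale) auto
    finally show "br k (?u (Suc i)) - sc (lam k) (?u (Suc i)) \<in> span (?u ` {..<Suc i})" .
  qed
qed

text \<open>On the span of the Krylov vectors of z at w, ad of [x, z] is triangular with diagonal
  lam [x, z], and it is a commutator, so its trace m * lam [x, z] vanishes.\<close>
lemma weight_vanishes_on_bracket:
  assumes zK: "\<And>k. k \<in> K \<Longrightarrow> br k z \<in> K"
    and weight: "\<And>k. k \<in> K \<Longrightarrow> br k w = sc (lam k) w"
    and w: "w \<noteq> 0" and x: "x \<in> K"
  shows "lam (br x z) = 0"
proof -
  let ?u = "krylov z w"
  obtain m where m: "0 < m" and ind: "independent (?u ` {..<m})"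
    and inj: "inj_on ?u {..<m}" and closes: "?u m \<in> span (?u ` {..<m})"
    using krylov_basis_of_cyclic_span[OF w] by blast
  let ?B = "?u ` {..<m}"
  have triangular: "br k (?u i) - sc (lam k) (?u i) \<in> span (?u ` {..<i})" if "k \<in> K" for k i
    using krylov_weight_triangular[OF zK weight] that by blast
  have u_in: "?u i \<in> span ?B" if "i < m" for i
    using that by (intro span_base) auto
  have K_in: "br k (?u i) \<in> span ?B" if "k \<in> K" "i < m" for k i
  proof -
    have "span (?u ` {..<i}) \<subseteq> span ?B"
      using that by (intro span_mono) auto
    then have "br k (?u i) - sc (lam k) (?u i) + sc (lam k) (?u i) \<in> span ?B"
      using triangular[OF that(1)] u_in[OF that(2)] by (intro span_add span_scale) auto
    then show ?thesis by simp
  qed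
  have z_in: "br z (?u i) \<in> span ?B" if "i < m" for i
  proof (cases "Suc i = m")
    case True
    then show ?thesis using closes by (simp add: krylov_Suc[symmetric])
  next
    case False
    then show ?thesis using that u_in[of "Suc i"] by (simp add: krylov_Suc[symmetric])
  qed
  have x_span: "br x v \<in> span ?B" if "v \<in> span ?B" for v
    using br_span_into_subspace[OF subspace_span _ that] K_in[OF x] by blast
  have z_span: "br z v \<in> span ?B" if "v \<in> span ?B" for v
    using br_span_into_subspace[OF subspace_span _ that] z_in by blast
  have xz_in: "br x (br z (?u i)) \<in> span ?B" and zx_in: "br z (br x (?u i)) \<in> span ?B"
    if "i < m" for i
    using that by (simp_all add: x_span z_span u_in)
  have "of_nat m * lam (br x z) = seq_trace ?u m (br (br x z))"
    using triangular zK[OF x] by (intro seq_trace_triangular[OF ind inj, symmetric]) blast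
  also have "br (br x z) = (\<lambda>v. br x (br z v) - br z (br x v))"
    by (rule ext) (simp add: jacobi_derivation[of x z])
  also have "seq_trace ?u m \<dots>
      = seq_trace ?u m (\<lambda>v. br x (br z v)) - seq_trace ?u m (\<lambda>v. br z (br x v))"
    using xz_in zx_in by (rule seq_trace_diff[OF ind])
  also have "\<dots> = 0"
    using seq_trace_br_commute[OF ind inj K_in[OF x] z_in] by simp
  finally show ?thesis using m by simp
qed

subsection \<open>Lie's theorem\<close>

fun derived_series_of :: "'a set \<Rightarrow> nat \<Rightarrow> 'a set" where
  "derived_series_of L 0 = L"
| "derived_series_of L (Suc n) =
     span {br x y | x y. x \<in> derived_series_of L n \<and> y \<in> derived_series_of L n}"

lemma derived_series_eq_of_UNIV: "derived_series sc br n = derived_series_of UNIV n"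
  by (induction n) simp_all

lemma derived_series_of_mono: "L \<subseteq> M \<Longrightarrow> derived_series_of L n \<subseteq> derived_series_of M n"
proof (induction n)
  case (Suc n)
  then have "{br x y | x y. x \<in> derived_series_of L n \<and> y \<in> derived_series_of L n} \<subseteq>
      {br x y | x y. x \<in> derived_series_of M n \<and> y \<in> derived_series_of M n}"
    by blast
  then show ?case by (simp add: span_mono)
qed simp

lemma derived_algebra_proper:
  assumes "derived_series_of L k \<subseteq> {0}" and "v \<in> L" "v \<noteq> 0"
  shows "span {br x y | x y. x \<in> L \<and> y \<in> L} \<noteq> L"
proof
  assume "span {br x y | x y. x \<in> L \<and> y \<in> L} = L"
  then have "derived_series_of L n = L" for n
    by (induction n) simp_all
  then show False using assms by blast
qed

lemma functional_vanishing_on_subspace: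
  assumes D: "subspace D" and z: "z \<notin> D"
  obtains f where "\<And>x y. f (x + y) = f x + f y" "\<And>a x. f (sc a x) = a * f x"
    "\<And>d. d \<in> D \<Longrightarrow> f d = 0" "f z = 1"
proof -
  obtain BD where BD: "BD \<subseteq> D" "independent BD" "D \<subseteq> span BD"
    using maximal_independent_subset[of D] by blast
  have span_BD: "span BD = D" using BD D span_minimal by blast
  then have "independent (insert z BD)" using z BD(2) by (simp add: independent_insertI)
  then obtain B where B: "insert z BD \<subseteq> B" "independent B" "UNIV \<subseteq> span B"
    using maximal_independent_subset_extend[OF subset_UNIV] by metis
  have in_B: "x \<in> span B" for x using B(3) by blast
  have "BD \<subseteq> B - {z}" using B(1) z BD(1) by blast
  then have D_sub: "D \<subseteq> span (B - {z})" using span_BD span_mono by blast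
  show ?thesis
  proof
    show "representation B (x + y) z = representation B x z + representation B y z" for x y
      by (simp add: representation_add[OF B(2) in_B in_B])
    show "representation B (sc a x) z = a * representation B x z" for a x
      by (simp add: representation_scale[OF B(2) in_B])
    show "representation B d z = 0" if "d \<in> D" for d
      using representation_extend[OF B(2) D_sub[THEN subsetD, OF that]]
        representation_ne_zero[of "B - {z}" d z] by auto
    show "representation B z z = 1"
      using representation_basis[OF B(2)] B(1) by simp
  qed
qed

definition weight_space :: "'a set \<Rightarrow> ('a \<Rightarrow> complex) \<Rightarrow> 'a set \<Rightarrow> 'a set" where
  "weight_space K lam V = {v \<in> V. \<forall>k\<in>K. br k v = sc (lam k) v}"

lemma subspace_weight_space: "subspace V \<Longrightarrow> subspace (weight_space K lam V)"
  unfolding weight_space_def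
  by (rule subspaceI)
    (auto simp: subspace_0 subspace_add subspace_scale br_addR br_scaleR scale_right_distrib
      scale_left_commute)

lemma weight_space_invariant:
  assumes zK: "\<And>k. k \<in> K \<Longrightarrow> br k z \<in> K" and lam: "\<And>k. k \<in> K \<Longrightarrow> lam (br k z) = 0"
    and zV: "\<And>v. v \<in> V \<Longrightarrow> br z v \<in> V" and w: "w \<in> weight_space K lam V"
  shows "br z w \<in> weight_space K lam V"
proof -
  have "br k (br z w) = sc (lam k) (br z w)" if k: "k \<in> K" for k
  proof -
    have "br k (br z w) = br (br k z) w + br z (br k w)" by (rule jacobi_derivation)
    also have "br (br k z) w = 0" using w zK[OF k] lam[OF k] by (simp add: weight_space_def)
    also have "br k w = sc (lam k) w" using w k by (simp add: weight_space_def)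
    finally show ?thesis by (simp add: br_scaleR)
  qed
  then show ?thesis using w zV by (simp add: weight_space_def)
qed

lemma codim_one_ideal:
  assumes L: "subspace L" and closed: "\<And>x y. x \<in> L \<Longrightarrow> y \<in> L \<Longrightarrow> br x y \<in> L"
    and proper: "span {br x y | x y. x \<in> L \<and> y \<in> L} \<noteq> L"
  obtains K z f where "subspace K" "K \<subseteq> L" "dim K < dim L" "z \<in> L"
    "\<And>x y. x \<in> L \<Longrightarrow> y \<in> L \<Longrightarrow> br x y \<in> K"
    "\<And>x. x \<in> L \<Longrightarrow> x - sc (f x) z \<in> K"
proof -
  define D where "D = span {br x y | x y. x \<in> L \<and> y \<in> L}"
  have "D \<subseteq> L" unfolding D_def using L closed by (intro span_minimal) auto
  then obtain z where z: "z \<in> L" "z \<notin> D" using proper unfolding D_def by blast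
  obtain f where f_add: "\<And>x y. f (x + y) = f x + f y" and f_scale: "\<And>a x. f (sc a x) = a * f x"
    and f_D: "\<And>d. d \<in> D \<Longrightarrow> f d = 0" and f_z: "f z = 1"
    using functional_vanishing_on_subspace[OF _ z(2)] unfolding D_def by blast
  have f_0: "f 0 = 0" using f_scale[of 0 0] by simp
  have f_diff: "f (x - y) = f x - f y" for x y using f_add[of "x - y" y] by simp
  define K where "K = {x \<in> L. f x = 0}"
  have K: "subspace K"
    unfolding K_def
    by (rule subspaceI) (simp_all add: subspace_0[OF L] subspace_add[OF L]
        subspace_scale[OF L] f_0 f_add f_scale)
  have K_L: "K \<subseteq> L" by (auto simp: K_def)
  have "z \<notin> K" using f_z by (simp add: K_def)
  then have "K \<subset> L" using K_L z(1) by blast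
  then have "dim K < dim L"
    using K L by (intro dim_psubset) (simp add: span_eq_iff[THEN iffD2])
  moreover have "br x y \<in> K" if "x \<in> L" "y \<in> L" for x y
    using that closed f_D[of "br x y"] unfolding K_def D_def by (blast intro: span_base)
  moreover have "x - sc (f x) z \<in> K" if "x \<in> L" for x
    using that z(1) L f_z by (simp add: K_def subspace_diff subspace_scale f_diff f_scale)
  ultimately show ?thesis using that K K_L z(1) by blast
qed

text \<open>Induction on dim L: a hyperplane K of L containing [L, L] is an ideal, so by induction
  it has a weight vector; its weight space is invariant under the remaining direction z,
  and an eigenvector of ad z in it is a common eigenvector of L.\<close>
theorem lie_common_eigenvector:
  assumes "subspace L" and "\<And>x y. x \<in> L \<Longrightarrow> y \<in> L \<Longrightarrow> br x y \<in> L"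
    and "derived_series_of L k \<subseteq> {0}"
    and "subspace V" and "\<And>x v. x \<in> L \<Longrightarrow> v \<in> V \<Longrightarrow> br x v \<in> V"
    and "v1 \<in> V" "v1 \<noteq> 0"
  shows "\<exists>v lam. v \<in> V \<and> v \<noteq> 0 \<and> (\<forall>x\<in>L. br x v = sc (lam x) v)"
  using assms
proof (induction "dim L" arbitrary: L k rule: less_induct)
  case less
  note L = less.prems
  show ?case
  proof (cases "L \<subseteq> {0}")
    case True
    then show ?thesis using L(6,7) by (intro exI[of _ v1] exI[of _ "\<lambda>_. 0"]) auto
  next
    case False
    then have proper: "span {br x y | x y. x \<in> L \<and> y \<in> L} \<noteq> L"
      using derived_algebra_proper[OF L(3)] by blast
    obtain K z f where K: "subspace K" "K \<subseteq> L" "dim K < dim L" and z: "z \<in> L"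
      and K_ideal: "\<And>x y. x \<in> L \<Longrightarrow> y \<in> L \<Longrightarrow> br x y \<in> K"
      and K_complement: "\<And>x. x \<in> L \<Longrightarrow> x - sc (f x) z \<in> K"
      using codim_one_ideal[OF L(1,2) proper] by blast
    have z_K: "br k z \<in> K" if "k \<in> K" for k
      using that K(2) z K_ideal by blast
    have "derived_series_of K k \<subseteq> {0}"
      using derived_series_of_mono[OF K(2)] L(3) by blast
    then have "\<exists>v lam. v \<in> V \<and> v \<noteq> 0 \<and> (\<forall>x\<in>K. br x v = sc (lam x) v)"
      using K_ideal K(2) L(5) by (intro less.hyps[OF K(3) K(1) _ _ L(4) _ L(6,7)]) blast+
    then obtain v0 lam where v0: "v0 \<in> V" "v0 \<noteq> 0" and lam: "\<forall>x\<in>K. br x v0 = sc (lam x) v0"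
      by blast
    have lam_z: "lam (br k z) = 0" if "k \<in> K" for k
      using weight_vanishes_on_bracket[OF z_K _ v0(2) that] lam by blast
    have "v0 \<in> weight_space K lam V" using v0 lam by (simp add: weight_space_def)
    then obtain v a where v: "v \<in> weight_space K lam V" "v \<noteq> 0" and va: "br z v = sc a v"
      using invariant_subspace_has_eigenvector[OF subspace_weight_space[OF L(4)]
          weight_space_invariant[where K=K and lam=lam and V=V, OF z_K lam_z L(5)[OF z]] _ v0(2)]
      by blast
    have "br x v = sc (lam (x - sc (f x) z) + f x * a) v" if x: "x \<in> L" for x
    proof -
      have "br x v = br (x - sc (f x) z) v + sc (f x) (br z v)"
        using br_addL[of "x - sc (f x) z" "sc (f x) z" v] by (simp add: br_scaleL)
      then show ?thesis
        using v(1) K_complement[OF x] va by (simp add: weight_space_def scale_left_distrib)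
    qed
    then show ?thesis
      using v by (intro exI[of _ v] exI[of _ "\<lambda>x. lam (x - sc (f x) z) + f x * a"])
        (auto simp: weight_space_def)
  qed
qed

subsection \<open>CPA-structures of rank one\<close>

lemma ad_eigenvector_weight:
  assumes c: "c \<noteq> 0" and lam: "\<And>x. br x c = sc (lam x) c"
  shows "lam (x + y) = lam x + lam y" and "lam (sc a x) = a * lam x" and "lam (br x y) = 0"
proof -
  have "sc (lam (x + y)) c = sc (lam x + lam y) c"
    by (simp add: lam[symmetric] br_addL scale_left_distrib)
  then show "lam (x + y) = lam x + lam y" using c by simp
  have "sc (lam (sc a x)) c = sc a (sc (lam x) c)"
    by (simp only: lam[symmetric] br_scaleL)
  then show "lam (sc a x) = a * lam x" using c by simp
  have "sc (lam y * lam x) c = sc (lam (br x y)) c + sc (lam x * lam y) c"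
    using jacobi_derivation[of x y c] by (simp only: lam br_scaleR scale_scale)
  then have "sc (lam (br x y)) c = 0" by (simp add: mult.commute)
  then show "lam (br x y) = 0" using c by simp
qed

text \<open>The product is x \<cdot> y = f(x) f(y) c; the derivation axiom of a CPA-structure is
  exactly the last hypothesis.\<close>
lemma cpa_of_character:
  assumes f_add: "\<And>x y. f (x + y) = f x + f y" and f_scale: "\<And>a x. f (sc a x) = a * f x"
    and f_br: "\<And>x y. f (br x y) = 0" and x0: "f x0 \<noteq> 0" and c: "c \<noteq> 0"
    and derivation: "\<And>y z. sc (f y) (br c z) + sc (f z) (br y c) = 0"
  shows "\<exists>p. cpa_structure sc br p \<and> (\<exists>x y. p x y \<noteq> 0)"
proof -
  define p where "p x y = sc (f x * f y) c" for x y
  have "cpa_structure sc br p"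
    unfolding cpa_structure_def
  proof (intro conjI allI)
    fix x y z a
    show "p (x + y) z = p x z + p y z" by (simp add: p_def f_add distrib_right scale_left_distrib)
    show "p x (y + z) = p x y + p x z" by (simp add: p_def f_add distrib_left scale_left_distrib)
    show "p (sc a x) y = sc a (p x y)" by (simp add: p_def f_scale mult.assoc)
    show "p x (sc a y) = sc a (p x y)" by (simp add: p_def f_scale mult.left_commute)
    show "p x y = p y x" by (simp add: p_def mult.commute)
    show "p (br x y) z = p x (p y z) - p y (p x z)" by (simp add: p_def f_scale f_br mult_ac)
    have "br (p x y) z + br y (p x z) = sc (f x) (sc (f y) (br c z) + sc (f z) (br y c))"
      by (simp add: p_def br_scaleL br_scaleR scale_right_distrib mult_ac)
    then show "p x (br y z) = br (p x y) z + br y (p x z)" by (simp add: p_def f_br derivation)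
  qed
  moreover have "p x0 x0 \<noteq> 0" using x0 c by (simp add: p_def)
  ultimately show ?thesis by blast
qed

theorem solvable_has_nontrivial_cpa:
  fixes x1 :: 'a
  assumes solvable: "derived_series_of UNIV k \<subseteq> {0}" and nonzero: "x1 \<noteq> 0"
  shows "\<exists>p. cpa_structure sc br p \<and> (\<exists>x y. p x y \<noteq> 0)"
proof -
  obtain c lam where c: "c \<noteq> 0" and lam: "\<And>x. br x c = sc (lam x) c"
    using lie_common_eigenvector[of UNIV k UNIV x1] solvable nonzero by auto
  note weight = ad_eigenvector_weight[OF c lam]
  show ?thesis
  proof (cases "\<exists>x0. lam x0 \<noteq> 0")
    case True
    then obtain x0 where "lam x0 \<noteq> 0" by blast
    then show ?thesis
    proof (rule cpa_of_character[OF weight _ c])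
      show "sc (lam y) (br c z) + sc (lam z) (br y c) = 0" for y z
        using br_antisym[of c z] by (simp add: lam mult.commute)
    qed
  next
    case False
    then have central: "br y c = 0" "br c y = 0" for y
      using lam br_antisym[of c y] by simp_all
    define D where "D = span {br x y | x y. x \<in> (UNIV :: 'a set) \<and> y \<in> UNIV}"
    have "D \<noteq> UNIV" using derived_algebra_proper[OF solvable _ nonzero] by (simp add: D_def)
    then obtain z where "z \<notin> D" by blast
    then obtain f where "\<And>x y. f (x + y) = f x + f y" "\<And>a x. f (sc a x) = a * f x"
      "\<And>d. d \<in> D \<Longrightarrow> f d = 0" "f z = 1"
      using functional_vanishing_on_subspace[of D] unfolding D_def by blast
    moreover have "f (br x y) = 0" if "\<And>d. d \<in> D \<Longrightarrow> f d = 0" for x y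
      using that unfolding D_def by (blast intro: span_base)
    ultimately show ?thesis
      using cpa_of_character[of f z c] c central by simp
  qed
qed

end

theorem corollary3p9:
  fixes sc :: "complex \<Rightarrow> 'a::ab_group_add \<Rightarrow> 'a" and br :: "'a \<Rightarrow> 'a \<Rightarrow> 'a"
  assumes "lie_algebra sc br"
    and "fin_dim sc"
    and "solvable_lie sc br"
    and "\<exists>x::'a. x \<noteq> 0"
  shows "\<exists>p. cpa_structure sc br p \<and> (\<exists>x y. p x y \<noteq> 0)"
proof -
  interpret vector_space sc
    using assms(1) by (simp add: lie_algebra_def)
  obtain B0 where B0: "finite B0" "span B0 = UNIV"
    using assms(2) by (auto simp: fin_dim_def)
  obtain Basis where Basis: "independent Basis" "UNIV \<subseteq> span Basis"
    using maximal_independent_subset[of UNIV] by blast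
  interpret finite_dim_lie_algebra sc Basis br
  proof unfold_locales
    show "finite Basis" using independent_span_bound[OF B0(1) Basis(1)] B0(2) by simp
  qed (use assms(1) Basis in \<open>auto simp: lie_algebra_def\<close>)
  obtain k where "derived_series sc br k = {0}"
    using assms(3) by (auto simp: solvable_lie_def)
  then show ?thesis
    using solvable_has_nontrivial_cpa[of k] assms(4) by (auto simp: derived_series_eq_of_UNIV)
qed

end
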